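(* Let $\mathcal T$ be a triangulation of a compact oriented surface $S$ (possibly with boundary), with vertex set $V$ and boundary vertex set $V_\partial$. For every non-empty subset $A\subseteq V$, $$2|A|-|F(A)|+|Lk(A)|-|A\cap V_\partial|=2\chi(G(A)\setminus\partial S)+\chi(G(A)\cap\partial S).$$
   Context: $F(A)$ is the set of triangles of $\mathcal T$ having at least one vertex in $A$. $Lk(A)$ is the set of pairs $(e,v)$ with $v\in A$, $e$ an edge with no endpoint in $A$, and $e,v$ forming a triangle of $\mathcal T$. $G(A)$ is the union of the open cells (vertices, open edges, open triangles) of $\mathcal T$ having at least one vertex in $A$; for a union $X$ of open cells, $\chi(X)$ denotes the number of $0$-cells minus the number of $1$-cells plus the number of $2$-cells contained in $X$; $G(A)\setminus\partial S$ (resp. $G(A)\cap\partial S$) consists of the cells of $G(A)$ not contained (resp. contained) in $\partial S$. *)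

theory Defs
  imports Main
begin

text \<open>A finite triangulated surface is modelled combinatorially as a finite set T of
triangles, each a 3-element set of vertices (a simplicial complex).
Cells are represented by their vertex sets: vertices {v}, edges {u,v}, triangles.\<close>

definition vertices :: "'a set set \<Rightarrow> 'a set" where
  "vertices T = \<Union>T"

definition edges :: "'a set set \<Rightarrow> 'a set set" where
  "edges T = {e. card e = 2 \<and> (\<exists>t\<in>T. e \<subseteq> t)}"

definition cells :: "'a set set \<Rightarrow> 'a set set" where
  "cells T = {c. c \<noteq> {} \<and> (\<exists>t\<in>T. c \<subseteq> t)}"

definition bedges :: "'a set set \<Rightarrow> 'a set set" where
  "bedges T = {e \<in> edges T. card {t \<in> T. e \<subseteq> t} = 1}"

definition bvertices :: "'a set set \<Rightarrow> 'a set" where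
  "bvertices T = \<Union>(bedges T)"

definition bcells :: "'a set set \<Rightarrow> 'a set set" where
  "bcells T = {c \<in> cells T. \<exists>e \<in> bedges T. c \<subseteq> e}"

definition link_edges :: "'a set set \<Rightarrow> 'a \<Rightarrow> 'a set set" where
  "link_edges T v = {e. v \<notin> e \<and> insert v e \<in> T}"

definition link_rel :: "'a set set \<Rightarrow> 'a \<Rightarrow> ('a \<times> 'a) set" where
  "link_rel T v = {(x, y). {x, y} \<in> link_edges T v}"

definition darts :: "'a \<times> 'a \<times> 'a \<Rightarrow> ('a \<times> 'a) set" where
  "darts o3 = (case o3 of (x, y, z) \<Rightarrow> {(x, y), (y, z), (z, x)})"

text \<open>T triangulates a compact (finite) surface, possibly with boundary:
 every edge lies in one or two triangles and the link of every vertex is connected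
 (hence a path or a cycle). It is oriented: triangles carry cyclic orders such that
 no directed edge occurs in two different triangles (coherent orientation).\<close>
definition triangulated_oriented_surface :: "'a set set \<Rightarrow> bool" where
  "triangulated_oriented_surface T \<longleftrightarrow>
     finite T \<and>
     (\<forall>t\<in>T. card t = 3) \<and>
     (\<forall>e\<in>edges T. card {t \<in> T. e \<subseteq> t} \<in> {1, 2}) \<and>
     (\<forall>v\<in>vertices T. \<forall>x\<in>\<Union>(link_edges T v). \<forall>y\<in>\<Union>(link_edges T v).
         (x, y) \<in> (link_rel T v)\<^sup>*) \<and>
     (\<exists>ori :: 'a set \<Rightarrow> 'a \<times> 'a \<times> 'a.
         (\<forall>t\<in>T. (case ori t of (x, y, z) \<Rightarrow> {x, y, z} = t)) \<and>
         (\<forall>t\<in>T. \<forall>t'\<in>T. darts (ori t) \<inter> darts (ori t') \<noteq> {} \<longrightarrow> t = t'))"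

definition Fset :: "'a set set \<Rightarrow> 'a set \<Rightarrow> 'a set set" where
  "Fset T A = {t \<in> T. t \<inter> A \<noteq> {}}"

definition Lk :: "'a set set \<Rightarrow> 'a set \<Rightarrow> ('a set \<times> 'a) set" where
  "Lk T A = {(e, v). v \<in> A \<and> e \<in> edges T \<and> e \<inter> A = {} \<and> insert v e \<in> T}"

definition Gcells :: "'a set set \<Rightarrow> 'a set \<Rightarrow> 'a set set" where
  "Gcells T A = {c \<in> cells T. c \<inter> A \<noteq> {}}"

text \<open>Euler characteristic of a union of open cells\<close>
definition chi :: "'a set set \<Rightarrow> int" where
  "chi X = (\<Sum>c\<in>X. (-1) ^ (card c - 1))"

end

theory Submission
  imports Defs
begin

text \<open>Sorting the cells of G(A) by dimension gives
\<chi>(G(A)) = |A| - |E(A)| + |F(A)| and \<chi>(G(A) \<inter> \<partial>S) = |A \<inter> \<partial>S| - |E(A) \<inter> \<partial>S|,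
where E(A) is the set of edges meeting A. The right-hand side of the identity equals
2\<chi>(G(A)) - \<chi>(G(A) \<inter> \<partial>S), so it remains to eliminate the edges. Count the pairs (e, t)
of an edge e and a triangle t \<in> F(A) containing it: each triangle has three edges, so
there are 3|F(A)| such pairs. Pairs with e \<inter> A = {} are exactly Lk(A), and the others
are the incidences of the edges of E(A), each of which lies in two triangles unless it
is a boundary edge. Hence 3|F(A)| = |Lk(A)| + 2|E(A)| - |E(A) \<inter> \<partial>S|.\<close>

definition edge_degree :: "'a set set \<Rightarrow> 'a set \<Rightarrow> nat" where
  "edge_degree T e = card {t \<in> T. e \<subseteq> t}"

definition edges_meeting :: "'a set set \<Rightarrow> 'a set \<Rightarrow> 'a set set" where
  "edges_meeting T A = {e \<in> edges T. e \<inter> A \<noteq> {}}"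

lemma chi_Diff_Int:
  assumes "finite X"
  shows "chi X = chi (X - B) + chi (X \<inter> B)"
  unfolding chi_def using assms by (simp add: sum.Int_Diff[of X _ B])

lemma chi_eq_card_by_dimension:
  assumes "finite X" and "\<And>c. c \<in> X \<Longrightarrow> card c \<in> {1, 2, 3}"
  shows "chi X = int (card {c \<in> X. card c = 1}) - int (card {c \<in> X. card c = 2})
                 + int (card {c \<in> X. card c = 3})"
proof -
  let ?X = "\<lambda>k. {c \<in> X. card c = k}"
  have "X = ?X 1 \<union> ?X 2 \<union> ?X 3"
    using assms(2) by auto
  then have "chi X = (\<Sum>c\<in>?X 1 \<union> ?X 2 \<union> ?X 3. (-1) ^ (card c - 1))"
    unfolding chi_def by simp
  also have "\<dots> = (\<Sum>c\<in>?X 1. (-1) ^ (card c - 1)) + (\<Sum>c\<in>?X 2. (-1) ^ (card c - 1))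
                     + (\<Sum>c\<in>?X 3. (-1) ^ (card c - 1))"
    using assms(1) by (simp add: sum.union_disjoint disjoint_iff Int_Un_distrib2)
  also have "\<dots> = (\<Sum>c\<in>?X 1. 1) + (\<Sum>c\<in>?X 2. -1) + (\<Sum>c\<in>?X 3. 1::int)"
    by (intro arg_cong2[where f = "(+)"] sum.cong) auto
  finally show ?thesis
    by (simp only: sum_constant sum_negf)
qed

lemma card_two_subsets_of_triangle:
  assumes "finite t" and "card t = 3"
  shows "card {e. e \<subseteq> t \<and> card e = 2} = 3"
  using n_subsets[OF assms(1), of 2] assms(2) by (simp add: numeral_eq_Suc)

locale pure_2_complex =
  fixes T :: "'a set set"
  assumes finite_complex: "finite T"
    and card_triangle: "t \<in> T \<Longrightarrow> card t = 3"
begin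

lemma finite_triangle: "t \<in> T \<Longrightarrow> finite t"
  using card_triangle by (intro card_ge_0_finite) simp

lemma finite_cells: "finite (cells T)"
proof (rule finite_subset)
  show "cells T \<subseteq> Pow (\<Union>T)"
    unfolding cells_def by auto
  show "finite (Pow (\<Union>T))"
    using finite_complex finite_triangle by blast
qed

lemma edges_subset_cells: "edges T \<subseteq> cells T"
  unfolding edges_def cells_def by auto

lemma finite_edges: "finite (edges T)"
  using finite_cells edges_subset_cells by (rule finite_subset[rotated])

lemma finite_Gcells: "finite (Gcells T A)"
  unfolding Gcells_def using finite_cells by simp

lemma card_edge: "e \<in> edges T \<Longrightarrow> card e = 2"
  unfolding edges_def by simp

lemma finite_edge: "e \<in> edges T \<Longrightarrow> finite e"
  using card_edge by (intro card_ge_0_finite) simp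

lemma card_cell: "c \<in> cells T \<Longrightarrow> card c \<in> {1, 2, 3}"
proof -
  assume "c \<in> cells T"
  then obtain t where t: "t \<in> T" "c \<subseteq> t" "c \<noteq> {}"
    unfolding cells_def by auto
  then have "finite c"
    using finite_triangle finite_subset by blast
  then have "card c \<ge> 1"
    using t(3) by (simp add: Suc_le_eq card_gt_0_iff)
  moreover have "card c \<le> 3"
    using t card_triangle finite_triangle card_mono by metis
  ultimately show ?thesis
    by auto
qed

lemma subset_triangle_card_3_eq: "t \<in> T \<Longrightarrow> c \<subseteq> t \<Longrightarrow> card c = 3 \<Longrightarrow> c = t"
  using card_subset_eq finite_triangle card_triangle by metis

lemma Gcells_card_1:
  assumes "A \<subseteq> vertices T"
  shows "{c \<in> Gcells T A. card c = 1} = (\<lambda>v. {v}) ` A"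
  using assms unfolding Gcells_def cells_def vertices_def by (auto simp: card_Suc_eq)

lemma Gcells_card_2: "{c \<in> Gcells T A. card c = 2} = edges_meeting T A"
  unfolding Gcells_def edges_meeting_def cells_def edges_def by auto

lemma Gcells_card_3: "{c \<in> Gcells T A. card c = 3} = Fset T A"
  unfolding Gcells_def Fset_def cells_def
  using subset_triangle_card_3_eq card_triangle by blast

lemma chi_Gcells:
  assumes "A \<subseteq> vertices T"
  shows "chi (Gcells T A) = int (card A) - int (card (edges_meeting T A)) + int (card (Fset T A))"
proof -
  have "chi (Gcells T A) = int (card {c \<in> Gcells T A. card c = 1})
      - int (card {c \<in> Gcells T A. card c = 2}) + int (card {c \<in> Gcells T A. card c = 3})"
    using card_cell by (intro chi_eq_card_by_dimension finite_Gcells) (auto simp: Gcells_def)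
  also have "\<dots> = int (card A) - int (card (edges_meeting T A)) + int (card (Fset T A))"
    unfolding Gcells_card_1[OF assms] Gcells_card_2 Gcells_card_3 by (simp add: card_image)
  finally show ?thesis .
qed

lemma bedges_subset_edges: "bedges T \<subseteq> edges T"
  unfolding bedges_def by auto

lemma card_bcell: "c \<in> bcells T \<Longrightarrow> card c \<in> {1, 2}"
proof -
  assume c: "c \<in> bcells T"
  then obtain e where e: "e \<in> bedges T" "c \<subseteq> e"
    unfolding bcells_def by auto
  then have "card c \<le> 2"
    using bedges_subset_edges card_edge finite_edge card_mono by (metis subsetD)
  moreover have "card c \<in> {1, 2, 3}"
    using c card_cell unfolding bcells_def by blast
  ultimately show ?thesis
    by auto
qed

lemma Gcells_bcells_card_1:
  "{c \<in> Gcells T A \<inter> bcells T. card c = 1} = (\<lambda>v. {v}) ` (A \<inter> bvertices T)"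
proof
  show "{c \<in> Gcells T A \<inter> bcells T. card c = 1} \<subseteq> (\<lambda>v. {v}) ` (A \<inter> bvertices T)"
    unfolding Gcells_def bcells_def bvertices_def by (auto simp: card_Suc_eq)
  show "(\<lambda>v. {v}) ` (A \<inter> bvertices T) \<subseteq> {c \<in> Gcells T A \<inter> bcells T. card c = 1}"
  proof
    fix c assume "c \<in> (\<lambda>v. {v}) ` (A \<inter> bvertices T)"
    then obtain v e where v: "c = {v}" "v \<in> A" "e \<in> bedges T" "v \<in> e"
      unfolding bvertices_def by auto
    moreover obtain t where "t \<in> T" "e \<subseteq> t"
      using v(3) bedges_subset_edges unfolding edges_def by auto
    ultimately show "c \<in> {c \<in> Gcells T A \<inter> bcells T. card c = 1}"
      unfolding Gcells_def bcells_def cells_def by auto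
  qed
qed

lemma Gcells_bcells_card_2:
  "{c \<in> Gcells T A \<inter> bcells T. card c = 2} = edges_meeting T A \<inter> bedges T"
proof
  show "{c \<in> Gcells T A \<inter> bcells T. card c = 2} \<subseteq> edges_meeting T A \<inter> bedges T"
  proof
    fix c assume "c \<in> {c \<in> Gcells T A \<inter> bcells T. card c = 2}"
    then obtain e where e: "e \<in> bedges T" "c \<subseteq> e" "card c = 2" "c \<inter> A \<noteq> {}"
      unfolding Gcells_def bcells_def by auto
    then have "e \<in> edges T"
      using bedges_subset_edges by auto
    then have "c = e"
      using e card_subset_eq finite_edge card_edge by metis
    then show "c \<in> edges_meeting T A \<inter> bedges T"
      using e \<open>e \<in> edges T\<close> unfolding edges_meeting_def by auto
  qed
  show "edges_meeting T A \<inter> bedges T \<subseteq> {c \<in> Gcells T A \<inter> bcells T. card c = 2}"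
    using edges_subset_cells card_edge
    unfolding Gcells_def bcells_def edges_meeting_def by blast
qed

lemma chi_Gcells_Int_bcells:
  "chi (Gcells T A \<inter> bcells T)
     = int (card (A \<inter> bvertices T)) - int (card (edges_meeting T A \<inter> bedges T))"
proof -
  have "chi (Gcells T A \<inter> bcells T) = int (card {c \<in> Gcells T A \<inter> bcells T. card c = 1})
      - int (card {c \<in> Gcells T A \<inter> bcells T. card c = 2})
      + int (card {c \<in> Gcells T A \<inter> bcells T. card c = 3})"
    using card_bcell by (intro chi_eq_card_by_dimension) (auto simp: finite_Gcells)
  also have "{c \<in> Gcells T A \<inter> bcells T. card c = 3} = {}"
    using card_bcell by fastforce
  finally show ?thesis
    unfolding Gcells_bcells_card_1 Gcells_bcells_card_2 by (simp add: card_image)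
qed


lemma finite_edge_triangle_incidences: "finite {(e, t). t \<in> Fset T A \<and> card e = 2 \<and> e \<subseteq> t}"
proof (rule finite_subset)
  show "{(e, t). t \<in> Fset T A \<and> card e = 2 \<and> e \<subseteq> t} \<subseteq> Pow (\<Union>T) \<times> T"
    unfolding Fset_def by auto
  show "finite (Pow (\<Union>T) \<times> T)"
    using finite_complex finite_triangle by blast
qed

lemma card_edge_triangle_incidences:
  "card {(e, t). t \<in> Fset T A \<and> card e = 2 \<and> e \<subseteq> t} = 3 * card (Fset T A)"
proof -
  have "{(e, t). t \<in> Fset T A \<and> card e = 2 \<and> e \<subseteq> t}
      = prod.swap ` (SIGMA t:Fset T A. {e. e \<subseteq> t \<and> card e = 2})"
    by force
  then have "card {(e, t). t \<in> Fset T A \<and> card e = 2 \<and> e \<subseteq> t}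
      = card (SIGMA t:Fset T A. {e. e \<subseteq> t \<and> card e = 2})"
    by (simp add: card_image)
  also have "\<dots> = (\<Sum>t\<in>Fset T A. card {e. e \<subseteq> t \<and> card e = 2})"
    using finite_complex finite_triangle unfolding Fset_def by (intro card_SigmaI) auto
  also have "\<dots> = (\<Sum>t\<in>Fset T A. 3)"
    using card_two_subsets_of_triangle finite_triangle card_triangle
    unfolding Fset_def by (intro sum.cong) auto
  finally show ?thesis
    by simp
qed

lemma card_Lk_eq_incidences_avoiding:
  "card (Lk T A) = card {(e, t). t \<in> Fset T A \<and> card e = 2 \<and> e \<subseteq> t \<and> e \<inter> A = {}}"
proof (rule bij_betw_same_card[of "\<lambda>(e, v). (e, insert v e)"], rule bij_betw_imageI)
  show "inj_on (\<lambda>(e, v). (e, insert v e)) (Lk T A)"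
    unfolding Lk_def by (rule inj_onI) (auto simp: insert_ident)
  show "(\<lambda>(e, v). (e, insert v e)) ` Lk T A
      = {(e, t). t \<in> Fset T A \<and> card e = 2 \<and> e \<subseteq> t \<and> e \<inter> A = {}}"
  proof
    show "(\<lambda>(e, v). (e, insert v e)) ` Lk T A
        \<subseteq> {(e, t). t \<in> Fset T A \<and> card e = 2 \<and> e \<subseteq> t \<and> e \<inter> A = {}}"
      unfolding Lk_def Fset_def edges_def by auto
  next
    show "{(e, t). t \<in> Fset T A \<and> card e = 2 \<and> e \<subseteq> t \<and> e \<inter> A = {}}
        \<subseteq> (\<lambda>(e, v). (e, insert v e)) ` Lk T A"
    proof clarify
      fix e t
      assume t: "t \<in> Fset T A" and e: "card e = 2" "e \<subseteq> t" "e \<inter> A = {}"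
      then obtain v where v: "v \<in> t" "v \<in> A" "t \<in> T"
        unfolding Fset_def by auto
      have "v \<notin> e" "finite e"
        using v e by (auto intro: card_ge_0_finite)
      then have "insert v e = t"
        using v e subset_triangle_card_3_eq by simp
      moreover have "(e, v) \<in> Lk T A"
        unfolding Lk_def edges_def using v e \<open>insert v e = t\<close> by auto
      ultimately show "(e, t) \<in> (\<lambda>(e, v). (e, insert v e)) ` Lk T A"
        by force
    qed
  qed
qed

lemma incidences_meeting_eq_Sigma:
  "{(e, t). t \<in> Fset T A \<and> card e = 2 \<and> e \<subseteq> t \<and> e \<inter> A \<noteq> {}}
     = (SIGMA e:edges_meeting T A. {t \<in> T. e \<subseteq> t})"
  unfolding Fset_def edges_meeting_def edges_def by blast

lemma card_Fset_double_count:
  "3 * card (Fset T A) = card (Lk T A) + (\<Sum>e\<in>edges_meeting T A. edge_degree T e)"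
proof -
  let ?I = "\<lambda>P. {(e, t). t \<in> Fset T A \<and> card e = 2 \<and> e \<subseteq> t \<and> P e}"
  have "3 * card (Fset T A) = card (?I (\<lambda>e. e \<inter> A = {}) \<union> ?I (\<lambda>e. e \<inter> A \<noteq> {}))"
    unfolding card_edge_triangle_incidences[symmetric] by (intro arg_cong[where f = card]) auto
  also have "\<dots> = card (?I (\<lambda>e. e \<inter> A = {})) + card (?I (\<lambda>e. e \<inter> A \<noteq> {}))"
    using finite_edge_triangle_incidences[of A]
    by (intro card_Un_disjoint) (auto elim: rev_finite_subset)
  also have "card (?I (\<lambda>e. e \<inter> A \<noteq> {})) = (\<Sum>e\<in>edges_meeting T A. edge_degree T e)"
    unfolding incidences_meeting_eq_Sigma edge_degree_def edges_meeting_def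
    using finite_edges finite_complex by (intro card_SigmaI) auto
  finally show ?thesis
    by (simp add: card_Lk_eq_incidences_avoiding)
qed

end


locale pseudo_surface = pure_2_complex +
  assumes edge_degree_1_or_2: "e \<in> edges T \<Longrightarrow> edge_degree T e \<in> {1, 2}"
begin

lemma sum_edge_degree:
  assumes "E \<subseteq> edges T"
  shows "(\<Sum>e\<in>E. int (edge_degree T e)) = 2 * int (card E) - int (card (E \<inter> bedges T))"
proof -
  have "finite E"
    using assms finite_edges by (rule finite_subset)
  have "(\<Sum>e\<in>E. int (edge_degree T e)) = (\<Sum>e\<in>E. 2 - (if e \<in> bedges T then 1 else 0))"
    using assms edge_degree_1_or_2 unfolding bedges_def edge_degree_def
    by (intro sum.cong) auto
  also have "\<dots> = 2 * int (card E) - (\<Sum>e\<in>E. if e \<in> bedges T then 1 else 0)"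
    by (simp add: sum_subtractf)
  also have "(\<Sum>e\<in>E. if e \<in> bedges T then 1 else 0) = int (card (E \<inter> bedges T))"
    using \<open>finite E\<close> by (simp add: sum.If_cases Int_def)
  finally show ?thesis .
qed

end

lemma triangulated_oriented_surface_imp_pseudo_surface:
  "triangulated_oriented_surface T \<Longrightarrow> pseudo_surface T"
  unfolding triangulated_oriented_surface_def pseudo_surface_def pseudo_surface_axioms_def
    pure_2_complex_def edge_degree_def
  by auto

theorem lemma2p5:
  fixes T :: "'a set set" and A :: "'a set"
  assumes "triangulated_oriented_surface T"
    and "A \<subseteq> vertices T" and "A \<noteq> {}"
  shows "2 * int (card A) - int (card (Fset T A)) + int (card (Lk T A))
           - int (card (A \<inter> bvertices T))
         = 2 * chi (Gcells T A - bcells T) + chi (Gcells T A \<inter> bcells T)"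
proof -
  interpret pseudo_surface T
    using assms(1) by (rule triangulated_oriented_surface_imp_pseudo_surface)
  have "2 * chi (Gcells T A - bcells T) + chi (Gcells T A \<inter> bcells T)
      = 2 * chi (Gcells T A) - chi (Gcells T A \<inter> bcells T)"
    using chi_Diff_Int[OF finite_Gcells, of A "bcells T"] by simp
  moreover have "3 * int (card (Fset T A)) = int (card (Lk T A))
      + 2 * int (card (edges_meeting T A)) - int (card (edges_meeting T A \<inter> bedges T))"
  proof -
    have "edges_meeting T A \<subseteq> edges T"
      unfolding edges_meeting_def by auto
    then show ?thesis
      using arg_cong[OF card_Fset_double_count, of int] sum_edge_degree by simp
  qed
  ultimately show ?thesis
    using chi_Gcells[OF assms(2)] chi_Gcells_Int_bcells[of A] by linarith
qed

end
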